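(* Let $\nu$ be a Borel probability measure on $\mathbb{R}$ with support $\Omega\subseteq[0,1]$, and suppose $\nu$ is an R-spectral measure with an R-spectrum $\Gamma$ such that $q\Gamma\subseteq\mathbb{Z}$ for some integer $q\ge1$. Let $\mathcal{C}$ be a finite set of nonnegative integers, $P=\{p_c\}_{c\in\mathcal{C}}$ with $p_c>0$, $\sum_cp_c=1$, and let $\eta_q=\sum_{c\in\mathcal{C}}p_c\delta_{qc}$. Then $\mu:=\eta_q*\nu$ is an R-spectral measure.
   Context: A probability measure $\rho$ on $\mathbb{R}$ is an R-spectral measure with R-spectrum $\Lambda$ if $\{e^{2\pi i\lambda x}:\lambda\in\Lambda\}$ is a Riesz basis of $L^2(\rho)$ (a basis that is also a frame: there exist $A,B>0$ with $A\|f\|^2\le\sum_\lambda|\int fe^{-2\pi i\lambda x}d\rho|^2\le B\|f\|^2$ for all $f$). $*$ denotes convolution of measures. *)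

theory Defs
  imports "HOL-Probability.Probability"
begin

definition msupport :: "real measure \<Rightarrow> real set" where
  "msupport M = {x. \<forall>e>0. emeasure M (ball x e) > 0}"

definition expo :: "real \<Rightarrow> real \<Rightarrow> complex" where
  "expo l x = exp (2 * pi * \<i> * complex_of_real (l * x))"

definition L2 :: "real measure \<Rightarrow> (real \<Rightarrow> complex) \<Rightarrow> bool" where
  "L2 \<rho> f \<longleftrightarrow> f \<in> borel_measurable \<rho> \<and> integrable \<rho> (\<lambda>x. (cmod (f x))\<^sup>2)"

definition L2norm2 :: "real measure \<Rightarrow> (real \<Rightarrow> complex) \<Rightarrow> real" where
  "L2norm2 \<rho> f = (\<integral>x. (cmod (f x))\<^sup>2 \<partial>\<rho>)"

definition fcoeff :: "real measure \<Rightarrow> (real \<Rightarrow> complex) \<Rightarrow> real \<Rightarrow> complex" where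
  "fcoeff \<rho> f l = (\<integral>x. f x * cnj (expo l x) \<partial>\<rho>)"

definition exp_frame :: "real measure \<Rightarrow> real set \<Rightarrow> bool" where
  "exp_frame \<rho> \<Lambda> \<longleftrightarrow> (\<exists>A B. A > 0 \<and> B > 0 \<and> (\<forall>f. L2 \<rho> f \<longrightarrow>
      (\<lambda>l. (cmod (fcoeff \<rho> f l))\<^sup>2) summable_on \<Lambda> \<and>
      A * L2norm2 \<rho> f \<le> (\<Sum>\<^sub>\<infinity>l\<in>\<Lambda>. (cmod (fcoeff \<rho> f l))\<^sup>2) \<and>
      (\<Sum>\<^sub>\<infinity>l\<in>\<Lambda>. (cmod (fcoeff \<rho> f l))\<^sup>2) \<le> B * L2norm2 \<rho> f))"

text \<open>The series sum over Lambda of c(l) e_l converges (unconditionally, i.e. along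
  the net of finite subsets of Lambda) to f in L^2(rho).\<close>
definition exp_series_conv :: "real measure \<Rightarrow> real set \<Rightarrow> (real \<Rightarrow> complex) \<Rightarrow> (real \<Rightarrow> complex) \<Rightarrow> bool" where
  "exp_series_conv \<rho> \<Lambda> c f \<longleftrightarrow> (\<forall>e>0. \<exists>F0. finite F0 \<and> F0 \<subseteq> \<Lambda> \<and>
      (\<forall>F. finite F \<and> F0 \<subseteq> F \<and> F \<subseteq> \<Lambda> \<longrightarrow>
        L2norm2 \<rho> (\<lambda>x. f x - (\<Sum>l\<in>F. c l * expo l x)) < e))"

definition exp_basis :: "real measure \<Rightarrow> real set \<Rightarrow> bool" where
  "exp_basis \<rho> \<Lambda> \<longleftrightarrow> (\<forall>f. L2 \<rho> f \<longrightarrow>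
      (\<exists>c. exp_series_conv \<rho> \<Lambda> c f) \<and>
      (\<forall>c c'. exp_series_conv \<rho> \<Lambda> c f \<longrightarrow> exp_series_conv \<rho> \<Lambda> c' f \<longrightarrow>
          (\<forall>l\<in>\<Lambda>. c l = c' l)))"

text \<open>rho is R-spectral with R-spectrum Lambda: the exponentials form a Riesz basis
  (a basis that is also a frame) of L^2(rho).\<close>
definition R_spectrum :: "real measure \<Rightarrow> real set \<Rightarrow> bool" where
  "R_spectrum \<rho> \<Lambda> \<longleftrightarrow> exp_basis \<rho> \<Lambda> \<and> exp_frame \<rho> \<Lambda>"

definition R_spectral :: "real measure \<Rightarrow> bool" where
  "R_spectral \<rho> \<longleftrightarrow> (\<exists>\<Lambda>. R_spectrum \<rho> \<Lambda>)"

definition eta :: "nat set \<Rightarrow> (nat \<Rightarrow> real) \<Rightarrow> nat \<Rightarrow> real measure" where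
  "eta C p q = measure_of UNIV (sets borel)
     (\<lambda>A. \<Sum>c\<in>C. ennreal (p c) * indicator A (real q * real c))"

end

theory Submission
  imports Defs "HOL-Library.Real_Mod" "HOL-Computational_Algebra.Polynomial"
begin

text \<open>
  Let m = |C|, fix N > max C and put t_j = j/(qN). The spectrum of \<mu> = \<eta>_q * \<nu> is
  \<Lambda> = \<Union>_{j<m} (\<Gamma> + t_j). Since q\<Gamma> \<subseteq> \<int>, on the fibre {x + qc | c \<in> C} the exponential
  e_{\<gamma>+t_j} takes the values e_\<gamma>(x) e_{t_j}(x) z_c^j, where the z_c = e^{2\<pi>ic/N} are distinct roots
  of unity. So on every fibre the exponentials indexed by \<Lambda> act through the invertible
  Vandermonde matrix (z_c^j). As the squared norm of f in L^2(\<mu>) is \<Sum>_c p_c \<integral>|f(x + qc)|^2 d\<nu>,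
  inverting this matrix fibrewise turns f \<in> L^2(\<mu>) into m functions in L^2(\<nu>) of comparable
  total norm, and expansions and Fourier coefficients of f along \<Lambda> become those of these
  functions along \<Gamma>. Hence the Riesz basis property passes from (\<nu>, \<Gamma>) to (\<mu>, \<Lambda>).
\<close>

lemma expo_cis: "expo l x = cis (2 * pi * (l * x))"
  unfolding expo_def cis_conv_exp by (simp add: algebra_simps)

lemma expo_add_freq: "expo (a + b) x = expo a x * expo b x"
  unfolding expo_def by (simp add: algebra_simps flip: exp_add)

lemma expo_add: "expo l (x + y) = expo l x * expo l y"
  unfolding expo_def by (simp add: algebra_simps flip: exp_add)

lemma expo_of_nat_mult_freq: "expo (real j * l) x = expo l x ^ j"
  unfolding expo_def by (simp add: mult_ac flip: exp_of_nat_mult)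

lemma norm_expo [simp]: "cmod (expo l x) = 1"
  by (simp add: expo_cis)

lemma cnj_expo_mult [simp]: "cnj (expo l x) * expo l x = 1"
  and expo_mult_cnj [simp]: "expo l x * cnj (expo l x) = 1"
  by (simp_all add: expo_cis cis_cnj cis_mult)

lemma expo_eq_1_iff: "expo l x = 1 \<longleftrightarrow> l * x \<in> \<int>"
proof -
  have "expo l x = 1 \<longleftrightarrow> (\<exists>n. l * x = of_int n)"
    unfolding expo_cis cis_eq_1_iff by (auto simp: mult_ac)
  then show ?thesis by (auto elim: Ints_cases)
qed

lemma expo_eq_iff: "expo l x = expo l y \<longleftrightarrow> l * (x - y) \<in> \<int>"
proof -
  have "expo l x = expo l (x - y) * expo l y"
    by (simp flip: expo_add)
  moreover have "expo l y \<noteq> 0"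
    using norm_expo[of l y] by (metis norm_zero zero_neq_one)
  ultimately show ?thesis
    by (auto simp flip: expo_eq_1_iff)
qed

lemma inj_on_roots_of_unity:
  assumes "\<forall>c\<in>C. c < N"
  shows "inj_on (\<lambda>c. expo (1 / real N) (real c)) C"
proof (rule inj_onI)
  fix c d assume cd: "c \<in> C" "d \<in> C" and "expo (1 / real N) (real c) = expo (1 / real N) (real d)"
  then obtain n where n: "(real c - real d) / real N = of_int n"
    by (auto simp: expo_eq_iff elim: Ints_cases)
  have "real c < real N" "real d < real N" using assms cd by auto
  with n have diff: "real c - real d = of_int n * real N" by (simp add: field_simps)
  have "\<bar>real c - real d\<bar> < real N"
    using \<open>real c < real N\<close> \<open>real d < real N\<close> by (simp add: abs_less_iff)
  then have "\<bar>of_int n\<bar> * real N < 1 * real N" by (simp add: diff abs_mult)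
  then have "\<bar>of_int n\<bar> < (1::real)" by (rule mult_right_less_imp_less) simp
  then have "n = 0" by linarith
  with diff show "c = d" by simp
qed

lemma expo_measurable [measurable]: "expo l \<in> borel_measurable borel"
  and cnj_expo_measurable [measurable]: "(\<lambda>x. cnj (expo l x)) \<in> borel_measurable borel"
  unfolding expo_def by (intro borel_measurable_continuous_onI continuous_intros)+

lemma L2_add:
  assumes f: "L2 M f" and g: "L2 M g"
  shows "L2 M (\<lambda>x. f x + g x)"
  unfolding L2_def
proof
  have [measurable]: "f \<in> borel_measurable M" "g \<in> borel_measurable M"
    using f g by (auto simp: L2_def)
  show "(\<lambda>x. f x + g x) \<in> borel_measurable M" by measurable
  show "integrable M (\<lambda>x. (cmod (f x + g x))\<^sup>2)"
  proof (rule Bochner_Integration.integrable_bound)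
    show "integrable M (\<lambda>x. 2 * (cmod (f x))\<^sup>2 + 2 * (cmod (g x))\<^sup>2)"
      using f g by (simp add: L2_def)
    show "(\<lambda>x. (cmod (f x + g x))\<^sup>2) \<in> borel_measurable M" by measurable
    have "(cmod (f x + g x))\<^sup>2 \<le> 2 * (cmod (f x))\<^sup>2 + 2 * (cmod (g x))\<^sup>2" for x
    proof -
      have "(cmod (f x + g x))\<^sup>2 \<le> (cmod (f x) + cmod (g x))\<^sup>2"
        by (simp add: power_mono norm_triangle_ineq)
      also have "\<dots> \<le> 2 * (cmod (f x))\<^sup>2 + 2 * (cmod (g x))\<^sup>2"
        using zero_le_power2[of "cmod (f x) - cmod (g x)"] unfolding power2_sum power2_diff by linarith
      finally show ?thesis .
    qed
    then show "AE x in M. norm ((cmod (f x + g x))\<^sup>2) \<le> norm (2 * (cmod (f x))\<^sup>2 + 2 * (cmod (g x))\<^sup>2)"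
      by simp
  qed
qed

lemma L2_bounded_mult:
  assumes f: "L2 M f" and [measurable]: "b \<in> borel_measurable M" and bounded: "\<And>x. cmod (b x) \<le> K"
  shows "L2 M (\<lambda>x. b x * f x)"
  unfolding L2_def
proof
  have [measurable]: "f \<in> borel_measurable M" using f by (simp add: L2_def)
  show "(\<lambda>x. b x * f x) \<in> borel_measurable M" by measurable
  show "integrable M (\<lambda>x. (cmod (b x * f x))\<^sup>2)"
  proof (rule Bochner_Integration.integrable_bound)
    show "integrable M (\<lambda>x. K\<^sup>2 * (cmod (f x))\<^sup>2)" using f by (simp add: L2_def)
    show "(\<lambda>x. (cmod (b x * f x))\<^sup>2) \<in> borel_measurable M" by measurable
    have "(cmod (b x))\<^sup>2 \<le> K\<^sup>2" for x
      using bounded[of x] by (simp add: power_mono)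
    then show "AE x in M. norm ((cmod (b x * f x))\<^sup>2) \<le> norm (K\<^sup>2 * (cmod (f x))\<^sup>2)"
      by (simp add: norm_mult power_mult_distrib mult_right_mono)
  qed
qed

lemma L2_const_mult: "L2 M f \<Longrightarrow> L2 M (\<lambda>x. a * f x)"
  by (rule L2_bounded_mult[where K="cmod a"]) auto

lemma L2_diff: "L2 M f \<Longrightarrow> L2 M g \<Longrightarrow> L2 M (\<lambda>x. f x - g x)"
  using L2_add[OF _ L2_const_mult[of M g "-1"], of f] by simp

lemma L2_sum: "finite S \<Longrightarrow> (\<And>i. i \<in> S \<Longrightarrow> L2 M (f i)) \<Longrightarrow> L2 M (\<lambda>x. \<Sum>i\<in>S. f i x)"
proof (induction S rule: finite_induct)
  case (insert i S)
  then show ?case by (simp add: L2_add)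
qed (simp add: L2_def)

lemma L2_expo:
  assumes "finite_measure M" "sets M = sets borel"
  shows "L2 M (expo l)"
proof -
  have "expo l \<in> borel_measurable M"
    unfolding measurable_cong_sets[OF assms(2) refl] by (rule expo_measurable)
  then show ?thesis
    using assms(1) by (simp add: L2_def finite_measure.integrable_const)
qed

lemma L2_integrable_bounded_mult:
  assumes "finite_measure M" and f: "L2 M f" and "b \<in> borel_measurable M" and "\<And>x. cmod (b x) \<le> 1"
  shows "integrable M (\<lambda>x. f x * b x)"
proof (rule Bochner_Integration.integrable_bound)
  show "integrable M (\<lambda>x. 1 + (cmod (f x))\<^sup>2)"
    using assms by (simp add: L2_def finite_measure.integrable_const)
  show "(\<lambda>x. f x * b x) \<in> borel_measurable M"
    using assms by (auto simp: L2_def)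
  have "cmod (f x) * cmod (b x) \<le> 1 + (cmod (f x))\<^sup>2" for x
  proof -
    have "cmod (f x) * cmod (b x) \<le> cmod (f x)"
      using assms(4) by (simp add: mult_left_le)
    also have "\<dots> \<le> 1 + (cmod (f x))\<^sup>2"
      using zero_le_power2[of "cmod (f x) - 1"] zero_le_power2[of "cmod (f x)"] norm_ge_zero[of "f x"]
      unfolding power2_diff power_one mult_1_right by linarith
    finally show ?thesis .
  qed
  then show "AE x in M. norm (f x * b x) \<le> norm (1 + (cmod (f x))\<^sup>2)"
    by (simp add: norm_mult)
qed

lemma L2norm2_nonneg: "L2norm2 M f \<ge> 0"
  unfolding L2norm2_def by simp

lemma sum_L2norm2_eq_integral:
  assumes "\<And>j. j \<in> J \<Longrightarrow> L2 M (g j)"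
  shows "integrable M (\<lambda>x. \<Sum>j\<in>J. (cmod (g j x))\<^sup>2)"
    and "(\<Sum>j\<in>J. L2norm2 M (g j)) = (\<integral>x. (\<Sum>j\<in>J. (cmod (g j x))\<^sup>2) \<partial>M)"
  using assms by (auto simp: L2_def L2norm2_def)

lemma exp_series_conv_cong:
  "(\<And>l. l \<in> \<Lambda> \<Longrightarrow> c l = c' l) \<Longrightarrow> exp_series_conv \<rho> \<Lambda> c f \<longleftrightarrow> exp_series_conv \<rho> \<Lambda> c' f"
  unfolding exp_series_conv_def by (auto cong: sum.cong simp: subset_iff)

definition exp_sum :: "(real \<Rightarrow> complex) \<Rightarrow> real set \<Rightarrow> real \<Rightarrow> complex" where
  "exp_sum c F x = (\<Sum>l\<in>F. c l * expo l x)"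

lemma L2_exp_sum:
  assumes "finite_measure M" "sets M = sets borel" "finite F"
  shows "L2 M (exp_sum c F)"
  unfolding exp_sum_def using assms by (intro L2_sum L2_const_mult L2_expo)

section \<open>Finite sums and Vandermonde matrices\<close>

lemma norm_sum_mult_square_le:
  fixes a b :: "'i \<Rightarrow> complex"
  shows "(cmod (\<Sum>i\<in>S. a i * b i))\<^sup>2 \<le> (\<Sum>i\<in>S. (cmod (a i))\<^sup>2) * (\<Sum>i\<in>S. (cmod (b i))\<^sup>2)"
proof -
  have "cmod (\<Sum>i\<in>S. a i * b i) \<le> (\<Sum>i\<in>S. cmod (a i) * cmod (b i))"
    by (metis (no_types, lifting) norm_mult norm_sum sum.cong)
  then have "(cmod (\<Sum>i\<in>S. a i * b i))\<^sup>2 \<le> (\<Sum>i\<in>S. cmod (a i) * cmod (b i))\<^sup>2"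
    by (simp add: power_mono)
  also have "\<dots> \<le> (\<Sum>i\<in>S. (cmod (a i))\<^sup>2) * (\<Sum>i\<in>S. (cmod (b i))\<^sup>2)"
    by (rule Cauchy_Schwarz_ineq_sum)
  finally show ?thesis .
qed

lemma norm_sum_mult_square_le_card:
  fixes a b :: "'i \<Rightarrow> complex"
  assumes "\<And>i. i \<in> S \<Longrightarrow> cmod (a i) \<le> 1"
  shows "(cmod (\<Sum>i\<in>S. a i * b i))\<^sup>2 \<le> real (card S) * (\<Sum>i\<in>S. (cmod (b i))\<^sup>2)"
proof -
  have "(cmod (\<Sum>i\<in>S. a i * b i))\<^sup>2 \<le> (\<Sum>i\<in>S. (cmod (a i))\<^sup>2) * (\<Sum>i\<in>S. (cmod (b i))\<^sup>2)"
    by (rule norm_sum_mult_square_le)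
  also have "\<dots> \<le> (\<Sum>i\<in>S. 1) * (\<Sum>i\<in>S. (cmod (b i))\<^sup>2)"
    using assms by (intro mult_right_mono sum_mono sum_nonneg) (auto simp: power_le_one)
  finally show ?thesis by simp
qed

lemma poly_eq_sum_lessThan:
  fixes p :: "'a::comm_semiring_1 poly"
  assumes "degree p < n"
  shows "poly p x = (\<Sum>j<n. coeff p j * x ^ j)"
  unfolding poly_altdef using assms
  by (intro sum.mono_neutral_left) (auto simp: coeff_eq_0)

lemma lagrange_basis_poly:
  fixes z :: "'i \<Rightarrow> 'a::field"
  assumes "finite C" "inj_on z C" "d \<in> C"
  obtains L where "degree L < card C" "\<And>c. c \<in> C \<Longrightarrow> poly L (z c) = (if c = d then 1 else 0)"
proof
  define L where "L = smult (inverse (\<Prod>e\<in>C-{d}. z d - z e)) (\<Prod>e\<in>C-{d}. [:- z e, 1:])"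
  have "degree L \<le> degree (\<Prod>e\<in>C-{d}. [:- z e, 1:])"
    unfolding L_def by (rule degree_smult_le)
  also have "\<dots> \<le> sum (degree \<circ> (\<lambda>e. [:- z e, 1:])) (C - {d})"
    using assms by (intro degree_prod_sum_le) auto
  also have "\<dots> < card C"
    using assms card_gt_0_iff[of C] by auto
  finally show "degree L < card C" .
  fix c assume "c \<in> C"
  show "poly L (z c) = (if c = d then 1 else 0)"
  proof (cases "c = d")
    case True
    have "(\<Prod>e\<in>C-{d}. z d - z e) \<noteq> 0"
      using assms by (auto simp: inj_on_def)
    then show ?thesis using True by (simp add: L_def poly_prod)
  next
    case False
    then show ?thesis
      using assms \<open>c \<in> C\<close> by (simp add: L_def poly_prod) blast
  qed
qed

lemma vandermonde_inverse:
  fixes z :: "'i \<Rightarrow> 'a::field"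
  assumes "finite C" and inj: "inj_on z C"
  obtains V :: "nat \<Rightarrow> 'i \<Rightarrow> 'a" where
    "\<And>c d. c \<in> C \<Longrightarrow> d \<in> C \<Longrightarrow> (\<Sum>j<card C. z c ^ j * V j d) = (if c = d then 1 else 0)"
    "\<And>j k. j < card C \<Longrightarrow> k < card C \<Longrightarrow> (\<Sum>c\<in>C. V j c * z c ^ k) = (if j = k then 1 else 0)"
proof -
  have "\<forall>d\<in>C. \<exists>L. degree L < card C \<and> (\<forall>c\<in>C. poly L (z c) = (if c = d then 1 else 0))"
    using lagrange_basis_poly[OF assms] by metis
  then obtain L where degL: "\<And>d. d \<in> C \<Longrightarrow> degree (L d) < card C"
    and polyL: "\<And>c d. c \<in> C \<Longrightarrow> d \<in> C \<Longrightarrow> poly (L d) (z c) = (if c = d then 1 else 0)"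
    by metis
  show thesis
  proof
    fix c d assume "c \<in> C" "d \<in> C"
    then show "(\<Sum>j<card C. z c ^ j * coeff (L d) j) = (if c = d then 1 else 0)"
      using poly_eq_sum_lessThan[OF degL, of d "z c"] polyL by (simp add: mult.commute)
  next
    fix j k assume "j < card C" "k < card C"
    have "(\<Sum>c\<in>C. smult (z c ^ k) (L c)) = monom 1 k"
    proof (rule poly_eqI_degree[where A="z ` C"])
      fix x assume "x \<in> z ` C"
      then obtain d where "d \<in> C" "x = z d" by auto
      then have "poly (\<Sum>c\<in>C. smult (z c ^ k) (L c)) x = (\<Sum>c\<in>C. if c = d then z c ^ k else 0)"
        using polyL by (auto simp: poly_sum intro!: sum.cong)
      also have "\<dots> = poly (monom 1 k) x"
        using assms \<open>d \<in> C\<close> \<open>x = z d\<close> by (simp add: poly_monom)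
      finally show "poly (\<Sum>c\<in>C. smult (z c ^ k) (L c)) x = poly (monom 1 k) x" .
    next
      show "degree (\<Sum>c\<in>C. smult (z c ^ k) (L c)) < card (z ` C)"
        using degL card_image[OF inj] \<open>k < card C\<close>
        by (auto intro!: degree_sum_less order.strict_trans1[OF degree_smult_le])
    qed (use \<open>k < card C\<close> card_image[OF inj] in \<open>simp add: degree_monom_eq\<close>)
    then have "(\<Sum>c\<in>C. z c ^ k * coeff (L c) j) = coeff (monom 1 k) j"
      by (metis (no_types, lifting) coeff_smult coeff_sum sum.cong)
    then show "(\<Sum>c\<in>C. coeff (L c) j * z c ^ k) = (if j = k then 1 else 0)"
      by (simp add: mult.commute)
  qed
qed

section \<open>Convolution with a finite discrete measure\<close>

lemma eta_eq_distr:
  assumes "finite C"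
  shows "eta C p q = distr (density (count_space C) p) borel (\<lambda>c. real q * real c)"
    (is "_ = ?M")
proof -
  have "eta C p q = measure_of UNIV (sets borel) (emeasure ?M)"
    unfolding eta_def
  proof (rule measure_of_eq)
    fix A :: "real set" assume "A \<in> sigma_sets UNIV (sets borel)"
    then have [measurable]: "A \<in> sets borel" by (metis sets.sigma_sets_eq space_borel)
    have "emeasure ?M A = emeasure (density (count_space C) p) ((\<lambda>c. real q * real c) -` A \<inter> C)"
      by (simp add: emeasure_distr)
    also have "\<dots> = (\<Sum>c\<in>C. ennreal (p c) * indicator A (real q * real c))"
      using assms by (subst emeasure_density) (auto simp: nn_integral_count_space_finite
          intro!: sum.cong split: split_indicator)
    finally show "(\<Sum>c\<in>C. ennreal (p c) * indicator A (real q * real c)) = emeasure ?M A" ..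
  qed simp
  also have "\<dots> = ?M"
    by (metis measure_of_of_measure sets_distr space_borel space_distr)
  finally show ?thesis .
qed

lemma ennreal_mult_less_top_iff_pos: "0 < a \<Longrightarrow> ennreal a * x < \<top> \<longleftrightarrow> x < \<top>"
  by (cases "x = 0") (auto simp: ennreal_mult_less_top)

locale discrete_convolution =
  fixes \<nu> :: "real measure" and C :: "nat set" and p :: "nat \<Rightarrow> real" and q :: nat
  assumes sets_\<nu> [measurable_cong]: "sets \<nu> = sets borel"
    and finite_measure_\<nu>: "finite_measure \<nu>"
    and finite_C: "finite C" and p_pos: "\<forall>c\<in>C. p c > 0"
begin

abbreviation "\<mu> \<equiv> eta C p q \<star> \<nu>"

lemma finite_measure_eta: "finite_measure (eta C p q)"
  unfolding eta_eq_distr[OF finite_C]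
proof (intro finite_measure.finite_measure_distr finite_measureI)
  show "emeasure (density (count_space C) p) (space (density (count_space C) p)) \<noteq> \<infinity>"
    using finite_C by (simp add: emeasure_density nn_integral_count_space_finite)
qed simp

lemma finite_measure_\<mu>: "finite_measure \<mu>"
  by (rule convolution_finite[OF finite_measure_eta finite_measure_\<nu> sets_\<nu>])
    (simp add: eta_eq_distr[OF finite_C])

lemma nn_integral_\<mu>:
  assumes [measurable]: "g \<in> borel_measurable borel"
  shows "(\<integral>\<^sup>+x. g x \<partial>\<mu>) = (\<Sum>c\<in>C. ennreal (p c) * (\<integral>\<^sup>+x. g (x + real q * real c) \<partial>\<nu>))"
proof -
  interpret \<nu>: finite_measure \<nu> by (rule finite_measure_\<nu>)
  have [measurable]: "(\<lambda>x. \<integral>\<^sup>+y. g (x + y) \<partial>\<nu>) \<in> borel_measurable borel" by measurable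
  have "(\<integral>\<^sup>+x. g x \<partial>\<mu>) = (\<integral>\<^sup>+x. \<integral>\<^sup>+y. g (x + y) \<partial>\<nu> \<partial>eta C p q)"
    by (rule nn_integral_convolution[OF finite_measure_eta finite_measure_\<nu> sets_\<nu>])
      (simp_all add: eta_eq_distr[OF finite_C])
  also have "\<dots> = (\<Sum>c\<in>C. ennreal (p c) * (\<integral>\<^sup>+x. g (x + real q * real c) \<partial>\<nu>))"
    unfolding eta_eq_distr[OF finite_C] using finite_C
    by (subst nn_integral_distr) (auto simp: nn_integral_density nn_integral_count_space_finite
        add.commute)
  finally show ?thesis .
qed

lemma integrable_\<mu>_iff:
  fixes g :: "real \<Rightarrow> 'b::{banach, second_countable_topology}"
  assumes [measurable]: "g \<in> borel_measurable borel"
  shows "integrable \<mu> g \<longleftrightarrow> (\<forall>c\<in>C. integrable \<nu> (\<lambda>x. g (x + real q * real c)))"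
  using finite_C p_pos
  by (simp add: integrable_iff_bounded nn_integral_\<mu> ennreal_mult_less_top_iff_pos cong: ball_cong)

lemma integral_\<mu>:
  fixes g :: "real \<Rightarrow> 'b::{banach, second_countable_topology}"
  assumes g: "integrable \<mu> g"
  shows "integral\<^sup>L \<mu> g = (\<Sum>c\<in>C. p c *\<^sub>R integral\<^sup>L \<nu> (\<lambda>x. g (x + real q * real c)))"
proof -
  interpret pair_sigma_finite "eta C p q" \<nu>
    using finite_measure_eta finite_measure_\<nu>
    by (intro pair_sigma_finite.intro finite_measure.sigma_finite_measure)
  have [measurable]: "g \<in> borel_measurable borel" using borel_measurable_integrable[OF g] by simp
  have sets_eta [measurable_cong]: "sets (eta C p q) = sets borel"
    by (simp add: eta_eq_distr[OF finite_C])
  have int_pair: "integrable (eta C p q \<Otimes>\<^sub>M \<nu>) (\<lambda>z. g (fst z + snd z))"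
    using g unfolding convolution_def by (subst (asm) integrable_distr_eq) (auto simp: case_prod_unfold)
  have "integral\<^sup>L \<mu> g = integral\<^sup>L (eta C p q \<Otimes>\<^sub>M \<nu>) (\<lambda>z. g (fst z + snd z))"
    unfolding convolution_def by (subst integral_distr) (auto simp: case_prod_unfold)
  also have "\<dots> = (\<integral>x. \<integral>y. g (x + y) \<partial>\<nu> \<partial>eta C p q)"
    using integral_fst'[OF int_pair] by simp
  also have "\<dots> = (\<integral>c. \<integral>y. g (y + real q * real c) \<partial>\<nu> \<partial>density (count_space C) p)"
    by (simp add: eta_eq_distr[OF finite_C] integral_distr add.commute)
  also have "\<dots> = (\<integral>c. p c *\<^sub>R (\<integral>y. g (y + real q * real c) \<partial>\<nu>) \<partial>count_space C)"
    using p_pos by (subst integral_density) (auto simp: AE_count_space less_imp_le)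
  also have "\<dots> = (\<Sum>c\<in>C. p c *\<^sub>R integral\<^sup>L \<nu> (\<lambda>x. g (x + real q * real c)))"
    by (simp add: lebesgue_integral_count_space_finite[OF finite_C])
  finally show ?thesis .
qed

end

section \<open>Fibrewise decomposition of \<open>L\<^sup>2(\<mu>)\<close>\<close>

locale spectral_convolution = discrete_convolution +
  fixes \<Gamma> :: "real set"
  assumes R_spectrum_\<nu>: "R_spectrum \<nu> \<Gamma>"
    and q_ge_1: "q \<ge> 1" and q_\<Gamma>_Ints: "\<forall>\<gamma>\<in>\<Gamma>. real q * \<gamma> \<in> \<int>"
    and sum_p: "(\<Sum>c\<in>C. p c) = 1"
begin

text \<open>
  W is the Vandermonde matrix (z_c^j), c \<in> C, j < m, of the distinct N-th roots of unity
  z_c = e^{2\<pi>ic/N}, and V is its inverse; the shifts t j satisfy e_{t j}(qc) = W c j.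
\<close>

definition N :: nat where "N = Suc (Max C)"
definition m :: nat where "m = card C"
definition t :: "nat \<Rightarrow> real" where "t j = real j / (real q * real N)"
definition W :: "nat \<Rightarrow> nat \<Rightarrow> complex" where "W c j = expo (1 / real N) (real c) ^ j"

definition V :: "nat \<Rightarrow> nat \<Rightarrow> complex" where
  "V = (SOME V. (\<forall>c\<in>C. \<forall>d\<in>C. (\<Sum>j<m. W c j * V j d) = (if c = d then 1 else 0)) \<and>
                (\<forall>j<m. \<forall>k<m. (\<Sum>c\<in>C. V j c * W c k) = (if j = k then 1 else 0)))"

definition \<Lambda> :: "real set" where "\<Lambda> = (\<lambda>(j, \<gamma>). \<gamma> + t j) ` ({..<m} \<times> \<Gamma>)"
definition slice :: "real set \<Rightarrow> nat \<Rightarrow> real set" where "slice G j = {\<gamma> \<in> \<Gamma>. \<gamma> + t j \<in> G}"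

lemma m_pos: "m > 0"
  using sum_p finite_C by (auto simp: m_def card_gt_0_iff)

lemma less_N: "c \<in> C \<Longrightarrow> c < N"
  using finite_C by (simp add: N_def le_imp_less_Suc)

lemma m_le_N: "m \<le> N"
proof -
  have "C \<subseteq> {..<N}" using less_N by auto
  then show ?thesis unfolding m_def by (metis card_lessThan card_mono finite_lessThan)
qed

lemma
  shows W_V_inverse: "c \<in> C \<Longrightarrow> d \<in> C \<Longrightarrow> (\<Sum>j<m. W c j * V j d) = (if c = d then 1 else 0)"
    and V_W_inverse: "j < m \<Longrightarrow> k < m \<Longrightarrow> (\<Sum>c\<in>C. V j c * W c k) = (if j = k then 1 else 0)"
proof -
  have "inj_on (\<lambda>c. expo (1 / real N) (real c)) C"
    using less_N by (intro inj_on_roots_of_unity) auto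
  then obtain V' where "\<And>c d. c \<in> C \<Longrightarrow> d \<in> C \<Longrightarrow> (\<Sum>j<m. W c j * V' j d) = (if c = d then 1 else 0)"
    "\<And>j k. j < m \<Longrightarrow> k < m \<Longrightarrow> (\<Sum>c\<in>C. V' j c * W c k) = (if j = k then 1 else 0)"
    unfolding m_def W_def by (rule vandermonde_inverse[OF finite_C]) blast
  then have "\<exists>V. (\<forall>c\<in>C. \<forall>d\<in>C. (\<Sum>j<m. W c j * V j d) = (if c = d then 1 else 0)) \<and>
                (\<forall>j<m. \<forall>k<m. (\<Sum>c\<in>C. V j c * W c k) = (if j = k then 1 else 0))"
    by blast
  from someI_ex[OF this, folded V_def]
  show "c \<in> C \<Longrightarrow> d \<in> C \<Longrightarrow> (\<Sum>j<m. W c j * V j d) = (if c = d then 1 else 0)"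
    and "j < m \<Longrightarrow> k < m \<Longrightarrow> (\<Sum>c\<in>C. V j c * W c k) = (if j = k then 1 else 0)"
    by blast+
qed

lemma sum_W_V_apply: "d \<in> C \<Longrightarrow> (\<Sum>j<m. W d j * (\<Sum>c\<in>C. V j c * v c)) = v d"
proof -
  assume d: "d \<in> C"
  have "(\<Sum>j<m. W d j * (\<Sum>c\<in>C. V j c * v c)) = (\<Sum>c\<in>C. (\<Sum>j<m. W d j * V j c) * v c)"
    by (simp add: sum_distrib_left sum_distrib_right mult.assoc) (rule sum.swap)
  also have "\<dots> = (\<Sum>c\<in>C. if c = d then v c else 0)"
    using d by (intro sum.cong) (auto simp: W_V_inverse)
  also have "\<dots> = v d"
    using d finite_C by simp
  finally show ?thesis .
qed

lemma sum_V_W_apply: "j < m \<Longrightarrow> (\<Sum>c\<in>C. V j c * (\<Sum>k<m. W c k * u k)) = u j"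
proof -
  assume j: "j < m"
  have "(\<Sum>c\<in>C. V j c * (\<Sum>k<m. W c k * u k)) = (\<Sum>k<m. (\<Sum>c\<in>C. V j c * W c k) * u k)"
    by (simp add: sum_distrib_left sum_distrib_right mult.assoc) (rule sum.swap)
  also have "\<dots> = (\<Sum>k<m. if k = j then u k else 0)"
    using j by (intro sum.cong) (auto simp: V_W_inverse)
  also have "\<dots> = u j"
    using j by simp
  finally show ?thesis .
qed

lemma norm_W [simp]: "cmod (W c j) = 1"
  by (simp add: W_def norm_power)

lemma expo_shift:
  assumes "\<gamma> \<in> \<Gamma>"
  shows "expo (\<gamma> + t j) (x + real q * real c) = expo \<gamma> x * expo (t j) x * W c j"
proof -
  have "real q * \<gamma> * real c \<in> \<int>"
    using q_\<Gamma>_Ints assms by simp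
  then have "expo \<gamma> (real q * real c) = 1"
    by (simp add: expo_eq_1_iff mult_ac)
  moreover have "expo (t j) (real q * real c) = W c j"
  proof -
    have "expo (1 / (real q * real N)) (real q * real c) = expo (1 / real N) (real c)"
      using q_ge_1 unfolding expo_def by simp
    then show ?thesis
      using expo_of_nat_mult_freq[of j "1 / (real q * real N)" "real q * real c"]
      by (simp add: t_def W_def)
  qed
  ultimately show ?thesis by (simp add: expo_add expo_add_freq)
qed

lemma shift_inject:
  assumes "\<gamma> \<in> \<Gamma>" "\<gamma>' \<in> \<Gamma>" "j < m" "j' < m" "\<gamma> + t j = \<gamma>' + t j'"
  shows "j = j'" "\<gamma> = \<gamma>'"
proof -
  obtain a b where ab: "real q * \<gamma> = of_int a" "real q * \<gamma>' = of_int b"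
    using q_\<Gamma>_Ints assms(1,2) by (metis Ints_cases)
  have "real q * (\<gamma> + t j) = real q * (\<gamma>' + t j')"
    using assms(5) by simp
  then have "of_int a + real j / real N = of_int b + real j' / real N"
    using ab q_ge_1 by (simp add: t_def algebra_simps)
  then have diff: "real j - real j' = of_int (b - a) * real N"
    using m_le_N m_pos by (simp add: field_simps)
  have "\<bar>real j - real j'\<bar> < real N"
    using assms(3,4) m_le_N by linarith
  then have "\<bar>of_int (b - a)\<bar> * real N < 1 * real N"
    by (simp add: diff abs_mult)
  then have "\<bar>of_int (b - a)\<bar> < (1::real)"
    by (rule mult_right_less_imp_less) simp
  then have "b - a = 0" by linarith
  with diff show "j = j'" by simp
  with assms(5) show "\<gamma> = \<gamma>'" by simp
qed

lemma inj_on_shift: "inj_on (\<lambda>(j, \<gamma>). \<gamma> + t j) ({..<m} \<times> \<Gamma>)"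
  by (auto intro!: inj_onI dest: shift_inject)

lemma shift_in_\<Lambda>: "j < m \<Longrightarrow> \<gamma> \<in> \<Gamma> \<Longrightarrow> \<gamma> + t j \<in> \<Lambda>"
  unfolding \<Lambda>_def by force

lemma slice_subset: "slice G j \<subseteq> \<Gamma>"
  unfolding slice_def by auto

lemma finite_slice: "finite G \<Longrightarrow> finite (slice G j)"
  unfolding slice_def by (rule finite_subset[of _ "(\<lambda>\<gamma>. \<gamma> + t j) -` G"])
    (auto intro: finite_vimageI simp: inj_on_def)

lemma slice_Un_shift: "F \<subseteq> \<Gamma> \<Longrightarrow> slice (G \<union> (\<lambda>\<gamma>. \<gamma> + t j) ` F) j = slice G j \<union> F"
  unfolding slice_def by auto

lemma sum_\<Lambda>_slices:
  assumes "finite G" "G \<subseteq> \<Lambda>"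
  shows "(\<Sum>l\<in>G. F l) = (\<Sum>j<m. \<Sum>\<gamma>\<in>slice G j. F (\<gamma> + t j))"
proof -
  have G: "G = (\<lambda>(j, \<gamma>). \<gamma> + t j) ` (SIGMA j:{..<m}. slice G j)"
    using assms(2) unfolding \<Lambda>_def slice_def by auto
  have inj: "inj_on (\<lambda>(j, \<gamma>). \<gamma> + t j) (SIGMA j:{..<m}. slice G j)"
    by (rule inj_on_subset[OF inj_on_shift]) (auto simp: slice_def)
  have "(\<Sum>l\<in>G. F l) = (\<Sum>(j, \<gamma>)\<in>(SIGMA j:{..<m}. slice G j). F (\<gamma> + t j))"
    by (subst G, subst sum.reindex[OF inj]) (simp add: case_prod_unfold)
  also have "\<dots> = (\<Sum>j<m. \<Sum>\<gamma>\<in>slice G j. F (\<gamma> + t j))"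
    using finite_slice[OF assms(1)] by (subst sum.Sigma) auto
  finally show ?thesis .
qed

lemma has_sum_\<Lambda>:
  fixes F :: "real \<Rightarrow> real"
  assumes "\<And>j. j < m \<Longrightarrow> ((\<lambda>\<gamma>. F (\<gamma> + t j)) has_sum s j) \<Gamma>"
  shows "(F has_sum (\<Sum>j<m. s j)) \<Lambda>"
proof -
  have "\<Lambda> = (\<Union>j<m. (\<lambda>\<gamma>. \<gamma> + t j) ` \<Gamma>)"
    unfolding \<Lambda>_def by auto
  moreover have "(F has_sum (\<Sum>j<m. s j)) (\<Union>j<m. (\<lambda>\<gamma>. \<gamma> + t j) ` \<Gamma>)"
  proof (rule sum_has_sum)
    fix j assume "j \<in> {..<m}"
    then show "(F has_sum s j) ((\<lambda>\<gamma>. \<gamma> + t j) ` \<Gamma>)"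
      using assms by (subst has_sum_reindex) (auto simp: inj_on_def comp_def)
  next
    fix j j' assume "j \<in> {..<m}" "j' \<in> {..<m}" "j \<noteq> j'"
    then show "(\<lambda>\<gamma>. \<gamma> + t j) ` \<Gamma> \<inter> (\<lambda>\<gamma>. \<gamma> + t j') ` \<Gamma> = {}"
      by (auto dest: shift_inject)
  qed simp
  ultimately show ?thesis by simp
qed

lemma function_on_\<Lambda>_exists: "\<exists>c. \<forall>j<m. \<forall>\<gamma>\<in>\<Gamma>. c (\<gamma> + t j) = a j \<gamma>"
proof
  let ?\<psi> = "\<lambda>(j, \<gamma>). \<gamma> + t j"
  show "\<forall>j<m. \<forall>\<gamma>\<in>\<Gamma>. (\<lambda>l. case_prod a (inv_into ({..<m} \<times> \<Gamma>) ?\<psi> l)) (\<gamma> + t j) = a j \<gamma>"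
    using inv_into_f_f[OF inj_on_shift] by (auto simp: case_prod_beta)
qed

definition fibre_energy :: "(real \<Rightarrow> complex) \<Rightarrow> real \<Rightarrow> real" where
  "fibre_energy f x = (\<Sum>c\<in>C. p c * (cmod (f (x + real q * real c)))\<^sup>2)"

text \<open>
  component applies V on each fibre and is the synthesis side of the decomposition
  (component_reconstruct); coeff_component applies the p-weighted adjoint of W and is the
  analysis side (fcoeff_\<mu>).
\<close>

definition component :: "(real \<Rightarrow> complex) \<Rightarrow> nat \<Rightarrow> real \<Rightarrow> complex" where
  "component f j x = cnj (expo (t j) x) * (\<Sum>c\<in>C. V j c * f (x + real q * real c))"

definition coeff_component :: "(real \<Rightarrow> complex) \<Rightarrow> nat \<Rightarrow> real \<Rightarrow> complex" where
  "coeff_component f j x = cnj (expo (t j) x) * (\<Sum>c\<in>C. p c * cnj (W c j) * f (x + real q * real c))"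

lemma L2_shift:
  assumes f: "L2 \<mu> f" and "c \<in> C"
  shows "L2 \<nu> (\<lambda>x. f (x + real q * real c))"
proof -
  have [measurable]: "f \<in> borel_measurable borel"
    using f by (simp add: L2_def)
  have "integrable \<mu> (\<lambda>x. (cmod (f x))\<^sup>2)"
    using f by (simp add: L2_def)
  then show ?thesis
    using \<open>c \<in> C\<close> by (simp add: L2_def integrable_\<mu>_iff)
qed

lemma L2_fibre_combination:
  assumes "L2 \<mu> f"
  shows "L2 \<nu> (\<lambda>x. cnj (expo (t j) x) * (\<Sum>c\<in>C. a c * f (x + real q * real c)))"
proof (rule L2_bounded_mult[where K=1])
  show "L2 \<nu> (\<lambda>x. \<Sum>c\<in>C. a c * f (x + real q * real c))"
    using assms finite_C by (intro L2_sum L2_const_mult L2_shift)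
qed (simp_all add: measurable_cong_sets[OF sets_\<nu> refl])

lemma L2_component: "L2 \<mu> f \<Longrightarrow> L2 \<nu> (component f j)"
  unfolding component_def by (rule L2_fibre_combination)

lemma L2_coeff_component: "L2 \<mu> f \<Longrightarrow> L2 \<nu> (coeff_component f j)"
  unfolding coeff_component_def by (rule L2_fibre_combination)

lemma L2norm2_\<mu>_eq_fibre_energy:
  assumes "L2 \<mu> f"
  shows "integrable \<nu> (fibre_energy f)" "L2norm2 \<mu> f = integral\<^sup>L \<nu> (fibre_energy f)"
proof -
  have shifts: "integrable \<nu> (\<lambda>x. (cmod (f (x + real q * real c)))\<^sup>2)" if "c \<in> C" for c
    using L2_shift[OF assms that] by (simp add: L2_def)
  then show "integrable \<nu> (fibre_energy f)"
    unfolding fibre_energy_def by auto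
  have "L2norm2 \<mu> f = (\<Sum>c\<in>C. p c * integral\<^sup>L \<nu> (\<lambda>x. (cmod (f (x + real q * real c)))\<^sup>2))"
    using assms unfolding L2norm2_def L2_def by (simp add: integral_\<mu>)
  also have "\<dots> = integral\<^sup>L \<nu> (fibre_energy f)"
    unfolding fibre_energy_def using shifts by simp
  finally show "L2norm2 \<mu> f = integral\<^sup>L \<nu> (fibre_energy f)" .
qed

lemma component_reconstruct:
  assumes "c \<in> C"
  shows "f (x + real q * real c) = (\<Sum>j<m. W c j * (expo (t j) x * component f j x))"
proof -
  have "expo (t j) x * component f j x = (\<Sum>d\<in>C. V j d * f (x + real q * real d))" for j
    unfolding component_def by (simp add: mult.assoc[symmetric])
  then show ?thesis
    using sum_W_V_apply[OF assms, of "\<lambda>d. f (x + real q * real d)"] by simp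
qed

lemma component_diff: "component (\<lambda>y. f y - g y) j x = component f j x - component g j x"
  unfolding component_def by (simp add: sum_subtractf right_diff_distrib)

lemma exp_sum_shift:
  assumes "finite G" "G \<subseteq> \<Lambda>"
  shows "exp_sum a G (x + real q * real c)
       = (\<Sum>j<m. W c j * (expo (t j) x * exp_sum (\<lambda>\<gamma>. a (\<gamma> + t j)) (slice G j) x))"
  unfolding exp_sum_def sum_\<Lambda>_slices[OF assms]
proof (rule sum.cong[OF refl])
  fix j
  have "a (\<gamma> + t j) * expo (\<gamma> + t j) (x + real q * real c)
      = W c j * (expo (t j) x * (a (\<gamma> + t j) * expo \<gamma> x))" if "\<gamma> \<in> slice G j" for \<gamma>
  proof -
    have "\<gamma> \<in> \<Gamma>" using that slice_subset by blast
    then show ?thesis unfolding expo_shift[OF \<open>\<gamma> \<in> \<Gamma>\<close>] by (simp add: ac_simps)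
  qed
  then show "(\<Sum>\<gamma>\<in>slice G j. a (\<gamma> + t j) * expo (\<gamma> + t j) (x + real q * real c))
      = W c j * (expo (t j) x * (\<Sum>\<gamma>\<in>slice G j. a (\<gamma> + t j) * expo \<gamma> x))"
    unfolding sum_distrib_left by (rule sum.cong[OF refl])
qed

lemma component_exp_sum:
  assumes "finite G" "G \<subseteq> \<Lambda>" "j < m"
  shows "component (exp_sum a G) j x = exp_sum (\<lambda>\<gamma>. a (\<gamma> + t j)) (slice G j) x"
  unfolding component_def exp_sum_shift[OF assms(1,2)] sum_V_W_apply[OF assms(3)]
  by (simp add: mult.assoc[symmetric])

definition p_min :: real where "p_min = Min (p ` C)"
definition V_norm2 :: real where "V_norm2 = (\<Sum>d\<in>C. \<Sum>j<m. (cmod (V j d))\<^sup>2)"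

lemma p_min_pos: "p_min > 0"
  using finite_C m_pos p_pos by (auto simp: p_min_def m_def card_gt_0_iff)

lemma p_min_le: "c \<in> C \<Longrightarrow> p_min \<le> p c"
  using finite_C by (simp add: p_min_def)

lemma p_le_1: "c \<in> C \<Longrightarrow> p c \<le> 1"
  using member_le_sum[of c C p] finite_C p_pos sum_p by (auto simp: less_imp_le)

lemma V_norm2_pos: "V_norm2 > 0"
proof -
  obtain c where c: "c \<in> C"
    using m_pos by (auto simp: m_def card_gt_0_iff)
  then have "(\<Sum>j<m. W c j * V j c) \<noteq> 0"
    by (simp add: W_V_inverse)
  then obtain j where "j < m" "V j c \<noteq> 0"
    by (metis (no_types, lifting) lessThan_iff mult_zero_right sum.neutral)
  then have "0 < (cmod (V j c))\<^sup>2"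
    by simp
  also have "\<dots> \<le> (\<Sum>j<m. (cmod (V j c))\<^sup>2)"
    using \<open>j < m\<close> by (intro member_le_sum) auto
  also have "\<dots> \<le> V_norm2"
    unfolding V_norm2_def using c finite_C by (intro member_le_sum sum_nonneg) auto
  finally show ?thesis .
qed

lemma sum_norm2_le_weighted: "(\<Sum>c\<in>C. (cmod (v c))\<^sup>2) \<le> (\<Sum>c\<in>C. p c * (cmod (v c))\<^sup>2) / p_min"
proof -
  have "(\<Sum>c\<in>C. (cmod (v c))\<^sup>2) \<le> (\<Sum>c\<in>C. p c * (cmod (v c))\<^sup>2 / p_min)"
    using p_min_pos p_min_le by (intro sum_mono) (simp add: field_simps mult_right_mono)
  then show ?thesis by (simp add: sum_divide_distrib)
qed

lemma sum_cnj_V_W_apply: "d \<in> C \<Longrightarrow> (\<Sum>j<m. cnj (V j d) * (\<Sum>c\<in>C. cnj (W c j) * u c)) = u d"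
proof -
  assume d: "d \<in> C"
  have "(\<Sum>j<m. cnj (V j d) * (\<Sum>c\<in>C. cnj (W c j) * u c)) = (\<Sum>c\<in>C. cnj (\<Sum>j<m. W c j * V j d) * u c)"
    by (simp add: sum_distrib_left sum_distrib_right ac_simps) (rule sum.swap)
  also have "\<dots> = (\<Sum>c\<in>C. if c = d then u c else 0)"
    using d by (intro sum.cong) (auto simp: W_V_inverse)
  also have "\<dots> = u d"
    using d finite_C by simp
  finally show ?thesis .
qed

lemma fcoeff_\<mu>:
  assumes f: "L2 \<mu> f" and \<gamma>: "\<gamma> \<in> \<Gamma>"
  shows "fcoeff \<mu> f (\<gamma> + t j) = fcoeff \<nu> (coeff_component f j) \<gamma>"
proof -
  define g where "g c x = f (x + real q * real c) * (cnj (expo (t j) x) * cnj (expo \<gamma> x))" for c x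
  have g: "integrable \<nu> (g c)" if "c \<in> C" for c
    unfolding g_def using finite_measure_\<nu> L2_shift[OF f that]
    by (intro L2_integrable_bounded_mult) (auto simp: norm_mult measurable_cong_sets[OF sets_\<nu> refl])
  have "integrable \<mu> (\<lambda>x. f x * cnj (expo (\<gamma> + t j) x))"
    using finite_measure_\<mu> f by (intro L2_integrable_bounded_mult) auto
  then have "fcoeff \<mu> f (\<gamma> + t j)
      = (\<Sum>c\<in>C. p c * integral\<^sup>L \<nu> (\<lambda>x. f (x + real q * real c) * cnj (expo (\<gamma> + t j) (x + real q * real c))))"
    unfolding fcoeff_def by (simp add: integral_\<mu> scaleR_conv_of_real)
  also have "\<dots> = (\<Sum>c\<in>C. p c * cnj (W c j) * integral\<^sup>L \<nu> (g c))"
  proof (rule sum.cong[OF refl])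
    fix c
    have "(\<lambda>x. f (x + real q * real c) * cnj (expo (\<gamma> + t j) (x + real q * real c)))
        = (\<lambda>x. cnj (W c j) * g c x)"
      unfolding g_def expo_shift[OF \<gamma>] by (simp add: ac_simps)
    then show "p c * integral\<^sup>L \<nu> (\<lambda>x. f (x + real q * real c) * cnj (expo (\<gamma> + t j) (x + real q * real c)))
        = p c * cnj (W c j) * integral\<^sup>L \<nu> (g c)"
      by simp
  qed
  also have "\<dots> = integral\<^sup>L \<nu> (\<lambda>x. \<Sum>c\<in>C. p c * cnj (W c j) * g c x)"
    using g by simp
  also have "\<dots> = fcoeff \<nu> (coeff_component f j) \<gamma>"
    unfolding fcoeff_def coeff_component_def g_def
    by (simp add: sum_distrib_left sum_distrib_right ac_simps)
  finally show ?thesis .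
qed

lemma sum_norm2_coeff_components_le:
  "(\<Sum>j<m. (cmod (coeff_component f j x))\<^sup>2) \<le> real m * real m / p_min * fibre_energy f x"
proof -
  have "(cmod (coeff_component f j x))\<^sup>2 \<le> real m * (\<Sum>c\<in>C. (cmod (f (x + real q * real c)))\<^sup>2)" for j
  proof -
    have "(cmod (coeff_component f j x))\<^sup>2 = (cmod (\<Sum>c\<in>C. p c * cnj (W c j) * f (x + real q * real c)))\<^sup>2"
      by (simp add: coeff_component_def norm_mult)
    also have "\<dots> \<le> real m * (\<Sum>c\<in>C. (cmod (f (x + real q * real c)))\<^sup>2)"
    proof (unfold m_def, rule norm_sum_mult_square_le_card)
      fix c assume "c \<in> C"
      then show "cmod (complex_of_real (p c) * cnj (W c j)) \<le> 1"
        using p_le_1 p_pos by (simp add: norm_mult abs_of_pos)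
    qed
    finally show ?thesis .
  qed
  then have "(\<Sum>j<m. (cmod (coeff_component f j x))\<^sup>2) \<le> (\<Sum>j<m. real m * (\<Sum>c\<in>C. (cmod (f (x + real q * real c)))\<^sup>2))"
    by (rule sum_mono)
  also have "\<dots> = real m * (real m * (\<Sum>c\<in>C. (cmod (f (x + real q * real c)))\<^sup>2))"
    by simp
  also have "\<dots> \<le> real m * (real m * (fibre_energy f x / p_min))"
    unfolding fibre_energy_def by (intro mult_left_mono sum_norm2_le_weighted) auto
  finally show ?thesis by simp
qed

lemma fibre_energy_le_sum_norm2_coeff_components:
  "fibre_energy f x \<le> real m * V_norm2 / p_min * (\<Sum>j<m. (cmod (coeff_component f j x))\<^sup>2)"
proof -
  define S where "S = (\<Sum>j<m. (cmod (coeff_component f j x))\<^sup>2)"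
  have "p d * (cmod (f (x + real q * real d)))\<^sup>2 \<le> V_norm2 / p_min * S" if d: "d \<in> C" for d
  proof -
    have "expo (t j) x * coeff_component f j x = (\<Sum>c\<in>C. cnj (W c j) * (p c * f (x + real q * real c)))" for j
      unfolding coeff_component_def mult.assoc[symmetric] expo_mult_cnj mult_1_left
      by (intro sum.cong) (simp_all add: ac_simps)
    then have "p d * f (x + real q * real d) = (\<Sum>j<m. cnj (V j d) * (expo (t j) x * coeff_component f j x))"
      using sum_cnj_V_W_apply[OF d, of "\<lambda>c. p c * f (x + real q * real c)"] by simp
    then have "(cmod (p d * f (x + real q * real d)))\<^sup>2 \<le> (\<Sum>j<m. (cmod (V j d))\<^sup>2) * S"
      using norm_sum_mult_square_le[of "\<lambda>j. cnj (V j d)" "\<lambda>j. expo (t j) x * coeff_component f j x" "{..<m}"]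
      by (simp add: S_def norm_mult)
    also have "\<dots> \<le> V_norm2 * S"
      unfolding V_norm2_def S_def using d finite_C
      by (intro mult_right_mono member_le_sum[of d C] sum_nonneg) auto
    finally have "p d * (p d * (cmod (f (x + real q * real d)))\<^sup>2) \<le> V_norm2 * S"
      using p_pos d by (simp add: norm_mult power_mult_distrib power2_eq_square ac_simps)
    moreover have "p_min * (p d * (cmod (f (x + real q * real d)))\<^sup>2) \<le> p d * (p d * (cmod (f (x + real q * real d)))\<^sup>2)"
      using p_min_le[OF d] p_pos d by (intro mult_right_mono) auto
    ultimately show ?thesis
      using p_min_pos by (simp add: field_simps)
  qed
  then have "fibre_energy f x \<le> (\<Sum>d\<in>C. V_norm2 / p_min * S)"
    unfolding fibre_energy_def by (rule sum_mono)
  then show ?thesis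
    by (simp add: S_def m_def)
qed

lemma fibre_energy_le_sum_norm2_components:
  "fibre_energy f x \<le> real m * (\<Sum>j<m. (cmod (component f j x))\<^sup>2)"
proof -
  have "(cmod (f (x + real q * real c)))\<^sup>2 \<le> real m * (\<Sum>j<m. (cmod (component f j x))\<^sup>2)" if "c \<in> C" for c
    unfolding component_reconstruct[OF that, of f x]
    using norm_sum_mult_square_le_card[of "{..<m}" "W c" "\<lambda>j. expo (t j) x * component f j x"]
    by (simp add: norm_mult)
  then have "fibre_energy f x \<le> (\<Sum>c\<in>C. p c * (real m * (\<Sum>j<m. (cmod (component f j x))\<^sup>2)))"
    unfolding fibre_energy_def using p_pos by (intro sum_mono mult_left_mono) (auto simp: less_imp_le)
  then show ?thesis
    by (simp flip: sum_distrib_right add: sum_p)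
qed

lemma norm2_component_le_fibre_energy:
  assumes "j < m"
  shows "(cmod (component f j x))\<^sup>2 \<le> V_norm2 / p_min * fibre_energy f x"
proof -
  have "(cmod (component f j x))\<^sup>2 = (cmod (\<Sum>c\<in>C. V j c * f (x + real q * real c)))\<^sup>2"
    by (simp add: component_def norm_mult)
  also have "\<dots> \<le> (\<Sum>c\<in>C. (cmod (V j c))\<^sup>2) * (\<Sum>c\<in>C. (cmod (f (x + real q * real c)))\<^sup>2)"
    by (rule norm_sum_mult_square_le)
  also have "\<dots> \<le> V_norm2 * (fibre_energy f x / p_min)"
  proof (intro mult_mono sum_norm2_le_weighted[of "\<lambda>c. f (x + real q * real c)", folded fibre_energy_def])
    show "(\<Sum>c\<in>C. (cmod (V j c))\<^sup>2) \<le> V_norm2"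
      unfolding V_norm2_def using assms by (intro sum_mono member_le_sum) auto
  qed (auto intro: V_norm2_pos[THEN less_imp_le] sum_nonneg)
  finally show ?thesis by simp
qed

lemma sum_L2norm2_coeff_components_le:
  assumes f: "L2 \<mu> f"
  shows "(\<Sum>j<m. L2norm2 \<nu> (coeff_component f j)) \<le> real m * real m / p_min * L2norm2 \<mu> f"
proof -
  note sums = sum_L2norm2_eq_integral[of "{..<m}" \<nu> "coeff_component f", OF L2_coeff_component[OF f]]
  note energy = L2norm2_\<mu>_eq_fibre_energy[OF f]
  have "(\<integral>x. (\<Sum>j<m. (cmod (coeff_component f j x))\<^sup>2) \<partial>\<nu>) \<le> (\<integral>x. real m * real m / p_min * fibre_energy f x \<partial>\<nu>)"
    using sums(1) energy(1) sum_norm2_coeff_components_le by (intro integral_mono) auto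
  then show ?thesis
    by (simp add: sums(2) energy(2))
qed

lemma L2norm2_le_sum_L2norm2_coeff_components:
  assumes f: "L2 \<mu> f"
  shows "L2norm2 \<mu> f \<le> real m * V_norm2 / p_min * (\<Sum>j<m. L2norm2 \<nu> (coeff_component f j))"
proof -
  note sums = sum_L2norm2_eq_integral[of "{..<m}" \<nu> "coeff_component f", OF L2_coeff_component[OF f]]
  note energy = L2norm2_\<mu>_eq_fibre_energy[OF f]
  have "(\<integral>x. fibre_energy f x \<partial>\<nu>) \<le> (\<integral>x. real m * V_norm2 / p_min * (\<Sum>j<m. (cmod (coeff_component f j x))\<^sup>2) \<partial>\<nu>)"
    using sums(1) energy(1) fibre_energy_le_sum_norm2_coeff_components by (intro integral_mono) auto
  then show ?thesis
    by (simp add: sums(2) energy(2))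
qed

lemma L2norm2_le_sum_L2norm2_components:
  assumes f: "L2 \<mu> f"
  shows "L2norm2 \<mu> f \<le> real m * (\<Sum>j<m. L2norm2 \<nu> (component f j))"
proof -
  note sums = sum_L2norm2_eq_integral[of "{..<m}" \<nu> "component f", OF L2_component[OF f]]
  note energy = L2norm2_\<mu>_eq_fibre_energy[OF f]
  have "(\<integral>x. fibre_energy f x \<partial>\<nu>) \<le> (\<integral>x. real m * (\<Sum>j<m. (cmod (component f j x))\<^sup>2) \<partial>\<nu>)"
    using sums(1) energy(1) fibre_energy_le_sum_norm2_components by (intro integral_mono) auto
  then show ?thesis
    by (simp add: sums(2) energy(2))
qed

lemma L2norm2_component_le:
  assumes f: "L2 \<mu> f" and "j < m"
  shows "L2norm2 \<nu> (component f j) \<le> V_norm2 / p_min * L2norm2 \<mu> f"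
proof -
  note energy = L2norm2_\<mu>_eq_fibre_energy[OF f]
  have "(\<integral>x. (cmod (component f j x))\<^sup>2 \<partial>\<nu>) \<le> (\<integral>x. V_norm2 / p_min * fibre_energy f x \<partial>\<nu>)"
    using L2_component[OF f, of j] energy(1) norm2_component_le_fibre_energy[OF \<open>j < m\<close>]
    by (intro integral_mono) (auto simp: L2_def)
  then show ?thesis
    unfolding energy(2) by (simp add: L2norm2_def)
qed

lemma component_residual:
  assumes "finite G" "G \<subseteq> \<Lambda>" "j < m"
  shows "component (\<lambda>y. f y - exp_sum c G y) j
       = (\<lambda>x. component f j x - exp_sum (\<lambda>\<gamma>. c (\<gamma> + t j)) (slice G j) x)"
  by (intro ext) (simp add: component_diff component_exp_sum[OF assms])

lemma L2_residual: "L2 \<mu> f \<Longrightarrow> finite G \<Longrightarrow> L2 \<mu> (\<lambda>y. f y - exp_sum c G y)"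
  using finite_measure_\<mu> by (intro L2_diff L2_exp_sum) auto

section \<open>Transfer of the Riesz basis property\<close>

lemma exp_series_conv_component:
  assumes f: "L2 \<mu> f" and conv: "exp_series_conv \<mu> \<Lambda> c f" and j: "j < m"
  shows "exp_series_conv \<nu> \<Gamma> (\<lambda>\<gamma>. c (\<gamma> + t j)) (component f j)"
  unfolding exp_series_conv_def exp_sum_def[symmetric]
proof (intro allI impI)
  fix e :: real assume "e > 0"
  define K where "K = V_norm2 / p_min"
  have "K \<ge> 0" unfolding K_def using V_norm2_pos p_min_pos by simp
  then obtain G0 where G0: "finite G0" "G0 \<subseteq> \<Lambda>"
    and close: "\<And>G. finite G \<Longrightarrow> G0 \<subseteq> G \<Longrightarrow> G \<subseteq> \<Lambda> \<Longrightarrow> L2norm2 \<mu> (\<lambda>y. f y - exp_sum c G y) < e / (K + 1)"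
    using conv \<open>e > 0\<close> unfolding exp_series_conv_def exp_sum_def[symmetric] by (metis divide_pos_pos add_nonneg_pos zero_less_one)
  show "\<exists>F0. finite F0 \<and> F0 \<subseteq> \<Gamma> \<and> (\<forall>F. finite F \<and> F0 \<subseteq> F \<and> F \<subseteq> \<Gamma> \<longrightarrow>
          L2norm2 \<nu> (\<lambda>x. component f j x - exp_sum (\<lambda>\<gamma>. c (\<gamma> + t j)) F x) < e)"
  proof (intro exI conjI allI impI)
    show "finite (slice G0 j)" using G0(1) by (rule finite_slice)
    show "slice G0 j \<subseteq> \<Gamma>" by (rule slice_subset)
    fix F assume F: "finite F \<and> slice G0 j \<subseteq> F \<and> F \<subseteq> \<Gamma>"
    define G where "G = G0 \<union> (\<lambda>\<gamma>. \<gamma> + t j) ` F"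
    have G: "finite G" "G0 \<subseteq> G" "G \<subseteq> \<Lambda>"
      using F G0 shift_in_\<Lambda>[OF j] by (auto simp: G_def)
    have "slice G j = F"
      using F by (auto simp: G_def slice_Un_shift)
    then have "L2norm2 \<nu> (\<lambda>x. component f j x - exp_sum (\<lambda>\<gamma>. c (\<gamma> + t j)) F x)
        = L2norm2 \<nu> (component (\<lambda>y. f y - exp_sum c G y) j)"
      by (simp add: component_residual[OF G(1,3) j])
    also have "\<dots> \<le> K * L2norm2 \<mu> (\<lambda>y. f y - exp_sum c G y)"
      unfolding K_def using L2_residual[OF f G(1)] j by (rule L2norm2_component_le)
    also have "\<dots> \<le> K * (e / (K + 1))"
      using close[OF G] \<open>K \<ge> 0\<close> by (intro mult_left_mono) auto
    also have "\<dots> < e"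
      using \<open>K \<ge> 0\<close> \<open>e > 0\<close> by (simp add: field_simps)
    finally show "L2norm2 \<nu> (\<lambda>x. component f j x - exp_sum (\<lambda>\<gamma>. c (\<gamma> + t j)) F x) < e" .
  qed
qed

lemma exp_series_conv_from_components:
  assumes f: "L2 \<mu> f" and conv: "\<And>j. j < m \<Longrightarrow> exp_series_conv \<nu> \<Gamma> (\<lambda>\<gamma>. c (\<gamma> + t j)) (component f j)"
  shows "exp_series_conv \<mu> \<Lambda> c f"
  unfolding exp_series_conv_def exp_sum_def[symmetric]
proof (intro allI impI)
  fix e :: real assume "e > 0"
  define e' where "e' = e / (real m * real m)"
  have "e' > 0" using \<open>e > 0\<close> m_pos by (simp add: e'_def)
  have "\<forall>j\<in>{..<m}. \<exists>F0. finite F0 \<and> F0 \<subseteq> \<Gamma> \<and> (\<forall>F. finite F \<and> F0 \<subseteq> F \<and> F \<subseteq> \<Gamma> \<longrightarrow>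
          L2norm2 \<nu> (\<lambda>x. component f j x - exp_sum (\<lambda>\<gamma>. c (\<gamma> + t j)) F x) < e')"
    using conv \<open>e' > 0\<close> unfolding exp_series_conv_def exp_sum_def[symmetric] by blast
  then obtain F0 where F0: "\<And>j. j < m \<Longrightarrow> finite (F0 j) \<and> F0 j \<subseteq> \<Gamma>"
    and close: "\<And>j F. j < m \<Longrightarrow> finite F \<Longrightarrow> F0 j \<subseteq> F \<Longrightarrow> F \<subseteq> \<Gamma> \<Longrightarrow>
          L2norm2 \<nu> (\<lambda>x. component f j x - exp_sum (\<lambda>\<gamma>. c (\<gamma> + t j)) F x) < e'"
    unfolding Ball_def lessThan_iff by metis
  define G0 where "G0 = (\<Union>j<m. (\<lambda>\<gamma>. \<gamma> + t j) ` F0 j)"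
  show "\<exists>G0. finite G0 \<and> G0 \<subseteq> \<Lambda> \<and> (\<forall>G. finite G \<and> G0 \<subseteq> G \<and> G \<subseteq> \<Lambda> \<longrightarrow>
          L2norm2 \<mu> (\<lambda>x. f x - exp_sum c G x) < e)"
  proof (intro exI conjI allI impI)
    show "finite G0" "G0 \<subseteq> \<Lambda>"
      using F0 shift_in_\<Lambda> by (auto simp: G0_def)
    fix G assume G: "finite G \<and> G0 \<subseteq> G \<and> G \<subseteq> \<Lambda>"
    have "F0 j \<subseteq> slice G j" if "j < m" for j
      using F0[OF that] G that by (auto simp: G0_def slice_def)
    moreover have "finite (slice G j)" for j
      using G by (simp add: finite_slice)
    ultimately have component_close: "L2norm2 \<nu> (component (\<lambda>y. f y - exp_sum c G y) j) < e'" if "j < m" for j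
      using G that close[OF that _ _ slice_subset] by (simp add: component_residual)
    have "L2norm2 \<mu> (\<lambda>x. f x - exp_sum c G x) \<le> real m * (\<Sum>j<m. L2norm2 \<nu> (component (\<lambda>y. f y - exp_sum c G y) j))"
      using G by (intro L2norm2_le_sum_L2norm2_components L2_residual f) auto
    also have "\<dots> < real m * (\<Sum>j<m. e')"
      using m_pos component_close by (intro mult_strict_left_mono sum_strict_mono) auto
    also have "\<dots> = e"
      using m_pos by (simp add: e'_def)
    finally show "L2norm2 \<mu> (\<lambda>x. f x - exp_sum c G x) < e" .
  qed
qed

lemma exp_basis_\<mu>: "exp_basis \<mu> \<Lambda>"
  unfolding exp_basis_def
proof (intro allI impI, rule conjI)
  fix f assume f: "L2 \<mu> f"
  have basis: "exp_basis \<nu> \<Gamma>"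
    using R_spectrum_\<nu> by (simp add: R_spectrum_def)
  have "\<forall>j. \<exists>a. j < m \<longrightarrow> exp_series_conv \<nu> \<Gamma> a (component f j)"
    using basis L2_component[OF f] by (auto simp: exp_basis_def)
  then obtain a where a: "\<And>j. j < m \<Longrightarrow> exp_series_conv \<nu> \<Gamma> (a j) (component f j)"
    by metis
  obtain c where c: "\<And>j \<gamma>. j < m \<Longrightarrow> \<gamma> \<in> \<Gamma> \<Longrightarrow> c (\<gamma> + t j) = a j \<gamma>"
    using function_on_\<Lambda>_exists[of a] by blast
  have "exp_series_conv \<nu> \<Gamma> (\<lambda>\<gamma>. c (\<gamma> + t j)) (component f j)" if "j < m" for j
    using a[OF that] c[OF that] exp_series_conv_cong[of \<Gamma> "\<lambda>\<gamma>. c (\<gamma> + t j)" "a j"] by simp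
  then show "\<exists>c. exp_series_conv \<mu> \<Lambda> c f"
    using exp_series_conv_from_components[OF f] by blast
  show "\<forall>c c'. exp_series_conv \<mu> \<Lambda> c f \<longrightarrow> exp_series_conv \<mu> \<Lambda> c' f \<longrightarrow> (\<forall>l\<in>\<Lambda>. c l = c' l)"
  proof (intro allI impI ballI)
    fix c c' l assume c: "exp_series_conv \<mu> \<Lambda> c f" and c': "exp_series_conv \<mu> \<Lambda> c' f" and "l \<in> \<Lambda>"
    then obtain j \<gamma> where j: "j < m" "\<gamma> \<in> \<Gamma>" "l = \<gamma> + t j"
      by (auto simp: \<Lambda>_def)
    show "c l = c' l"
      using basis L2_component[OF f, of j] j exp_series_conv_component[OF f c j(1)]
        exp_series_conv_component[OF f c' j(1)]
      unfolding exp_basis_def by blast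
  qed
qed

lemma exp_frame_\<nu>:
  obtains A B where "A > 0" "B > 0"
    "\<And>g. L2 \<nu> g \<Longrightarrow> (\<lambda>l. (cmod (fcoeff \<nu> g l))\<^sup>2) summable_on \<Gamma>"
    "\<And>g. L2 \<nu> g \<Longrightarrow> A * L2norm2 \<nu> g \<le> (\<Sum>\<^sub>\<infinity>l\<in>\<Gamma>. (cmod (fcoeff \<nu> g l))\<^sup>2)"
    "\<And>g. L2 \<nu> g \<Longrightarrow> (\<Sum>\<^sub>\<infinity>l\<in>\<Gamma>. (cmod (fcoeff \<nu> g l))\<^sup>2) \<le> B * L2norm2 \<nu> g"
  using R_spectrum_\<nu> unfolding R_spectrum_def exp_frame_def by metis

lemma has_sum_fcoeff_\<mu>:
  assumes f: "L2 \<mu> f"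
  shows "((\<lambda>l. (cmod (fcoeff \<mu> f l))\<^sup>2)
          has_sum (\<Sum>j<m. \<Sum>\<^sub>\<infinity>\<gamma>\<in>\<Gamma>. (cmod (fcoeff \<nu> (coeff_component f j) \<gamma>))\<^sup>2)) \<Lambda>"
proof (rule has_sum_\<Lambda>)
  fix j
  obtain A B where "\<And>g. L2 \<nu> g \<Longrightarrow> (\<lambda>l. (cmod (fcoeff \<nu> g l))\<^sup>2) summable_on \<Gamma>"
    by (metis exp_frame_\<nu>)
  then have "((\<lambda>\<gamma>. (cmod (fcoeff \<nu> (coeff_component f j) \<gamma>))\<^sup>2)
      has_sum (\<Sum>\<^sub>\<infinity>\<gamma>\<in>\<Gamma>. (cmod (fcoeff \<nu> (coeff_component f j) \<gamma>))\<^sup>2)) \<Gamma>"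
    using L2_coeff_component[OF f] by (simp add: has_sum_infsum)
  then show "((\<lambda>\<gamma>. (cmod (fcoeff \<mu> f (\<gamma> + t j)))\<^sup>2)
      has_sum (\<Sum>\<^sub>\<infinity>\<gamma>\<in>\<Gamma>. (cmod (fcoeff \<nu> (coeff_component f j) \<gamma>))\<^sup>2)) \<Gamma>"
    by (rule has_sum_cong[THEN iffD2, rotated]) (simp add: fcoeff_\<mu>[OF f])
qed

lemma exp_frame_\<mu>: "exp_frame \<mu> \<Lambda>"
proof -
  obtain A B where AB: "A > 0" "B > 0"
    and lower: "\<And>g. L2 \<nu> g \<Longrightarrow> A * L2norm2 \<nu> g \<le> (\<Sum>\<^sub>\<infinity>l\<in>\<Gamma>. (cmod (fcoeff \<nu> g l))\<^sup>2)"
    and upper: "\<And>g. L2 \<nu> g \<Longrightarrow> (\<Sum>\<^sub>\<infinity>l\<in>\<Gamma>. (cmod (fcoeff \<nu> g l))\<^sup>2) \<le> B * L2norm2 \<nu> g"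
    by (metis exp_frame_\<nu>)
  define K1 where "K1 = real m * real m / p_min"
  define K2 where "K2 = real m * V_norm2 / p_min"
  have "K1 > 0" "K2 > 0"
    using m_pos p_min_pos V_norm2_pos by (simp_all add: K1_def K2_def)
  show ?thesis
    unfolding exp_frame_def
  proof (intro exI conjI allI impI)
    show "A / K2 > 0" "B * K1 > 0"
      using AB \<open>K1 > 0\<close> \<open>K2 > 0\<close> by simp_all
    fix f assume f: "L2 \<mu> f"
    define n where "n = (\<Sum>j<m. L2norm2 \<nu> (coeff_component f j))"
    define s where "s = (\<Sum>j<m. \<Sum>\<^sub>\<infinity>\<gamma>\<in>\<Gamma>. (cmod (fcoeff \<nu> (coeff_component f j) \<gamma>))\<^sup>2)"
    have total: "((\<lambda>l. (cmod (fcoeff \<mu> f l))\<^sup>2) has_sum s) \<Lambda>"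
      unfolding s_def using f by (rule has_sum_fcoeff_\<mu>)
    then show "(\<lambda>l. (cmod (fcoeff \<mu> f l))\<^sup>2) summable_on \<Lambda>"
      by (rule has_sum_imp_summable)
    have infsum_eq: "(\<Sum>\<^sub>\<infinity>l\<in>\<Lambda>. (cmod (fcoeff \<mu> f l))\<^sup>2) = s"
      using total by (rule infsumI)
    have "L2norm2 \<mu> f \<le> K2 * n"
      using L2norm2_le_sum_L2norm2_coeff_components[OF f] by (simp add: n_def K2_def)
    then have "A / K2 * L2norm2 \<mu> f \<le> A / K2 * (K2 * n)"
      using AB \<open>K2 > 0\<close> by (intro mult_left_mono) simp_all
    also have "\<dots> = A * n"
      using \<open>K2 > 0\<close> by simp
    also have "\<dots> \<le> s"
      using lower[OF L2_coeff_component[OF f]] by (simp add: n_def s_def sum_distrib_left sum_mono)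
    finally show "A / K2 * L2norm2 \<mu> f \<le> (\<Sum>\<^sub>\<infinity>l\<in>\<Lambda>. (cmod (fcoeff \<mu> f l))\<^sup>2)"
      unfolding infsum_eq .
    have "s \<le> B * n"
      using upper[OF L2_coeff_component[OF f]] by (simp add: n_def s_def sum_distrib_left sum_mono)
    also have "\<dots> \<le> B * (K1 * L2norm2 \<mu> f)"
      using sum_L2norm2_coeff_components_le[OF f] AB
      by (intro mult_left_mono) (simp_all add: n_def K1_def less_imp_le)
    finally show "(\<Sum>\<^sub>\<infinity>l\<in>\<Lambda>. (cmod (fcoeff \<mu> f l))\<^sup>2) \<le> B * K1 * L2norm2 \<mu> f"
      unfolding infsum_eq by (simp add: mult.assoc)
  qed
qed

lemma R_spectrum_\<mu>: "R_spectrum \<mu> \<Lambda>"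
  unfolding R_spectrum_def using exp_basis_\<mu> exp_frame_\<mu> by blast

end

theorem theorem5p2:
  fixes \<nu> :: "real measure" and \<Gamma> :: "real set" and q :: nat
    and C :: "nat set" and p :: "nat \<Rightarrow> real"
  assumes "sets \<nu> = sets borel" and "prob_space \<nu>"
    and "msupport \<nu> \<subseteq> {0..1}"
    and "R_spectrum \<nu> \<Gamma>"
    and "q \<ge> 1" and "\<forall>\<gamma>\<in>\<Gamma>. real q * \<gamma> \<in> \<int>"
    and "finite C" and "\<forall>c\<in>C. p c > 0" and "(\<Sum>c\<in>C. p c) = 1"
  shows "R_spectral (eta C p q \<star> \<nu>)"
proof -
  have "finite_measure \<nu>"
    using assms(2) by (simp add: prob_space_def)
  then interpret spectral_convolution \<nu> C p q \<Gamma>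
    using assms by (simp add: spectral_convolution_def spectral_convolution_axioms_def discrete_convolution_def)
  show ?thesis
    unfolding R_spectral_def using R_spectrum_\<mu> by blast
qed

end
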